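(* In any tree $T=(V,E)$, the quantity $$\Lambda_1=\sum_{\{st,uv\}\in Q}\big(a_{su}(k_t+k_v)+a_{sv}(k_t+k_u)+a_{tu}(k_s+k_v)+a_{tv}(k_s+k_u)\big)$$ satisfies $$\Lambda_1=\sum_{st\in E}\Big((k_t-1)(\xi(s)-k_t)+(k_s-1)(\xi(t)-k_s)\Big).$$
   Context: $a_{ij}$ adjacency entries, $k_x$ degree, $\xi(s)=\sum_{t\in\Gamma(s)}k_t$ with $\Gamma(s)$ the neighbourhood of $s$. $Q$ is the set of unordered pairs $\{st,uv\}$ of edges with $s,t,u,v$ pairwise distinct. *)

theory Defs
  imports Main
begin

definition simple_graph :: "'a set \<Rightarrow> 'a set set \<Rightarrow> bool" where
  "simple_graph V E \<longleftrightarrow> finite V \<and>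
     (\<forall>e\<in>E. \<exists>x y. x \<in> V \<and> y \<in> V \<and> x \<noteq> y \<and> e = {x, y})"

definition is_walk :: "'a set set \<Rightarrow> 'a list \<Rightarrow> bool" where
  "is_walk E xs \<longleftrightarrow> xs \<noteq> [] \<and> (\<forall>i. i + 1 < length xs \<longrightarrow> {xs ! i, xs ! (i + 1)} \<in> E)"

definition connected_graph :: "'a set \<Rightarrow> 'a set set \<Rightarrow> bool" where
  "connected_graph V E \<longleftrightarrow>
     (\<forall>x\<in>V. \<forall>y\<in>V. \<exists>xs. is_walk E xs \<and> hd xs = x \<and> last xs = y)"

definition has_cycle :: "'a set set \<Rightarrow> bool" where
  "has_cycle E \<longleftrightarrow>
     (\<exists>xs. 3 \<le> length xs \<and> distinct xs \<and> is_walk E xs \<and> {last xs, hd xs} \<in> E)"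

definition is_tree :: "'a set \<Rightarrow> 'a set set \<Rightarrow> bool" where
  "is_tree V E \<longleftrightarrow> simple_graph V E \<and> V \<noteq> {} \<and> connected_graph V E \<and> \<not> has_cycle E"

definition adj :: "'a set set \<Rightarrow> 'a \<Rightarrow> 'a \<Rightarrow> int" where
  "adj E x y = (if {x, y} \<in> E then 1 else 0)"

definition neighbours :: "'a set \<Rightarrow> 'a set set \<Rightarrow> 'a \<Rightarrow> 'a set" where
  "neighbours V E s = {t \<in> V. {s, t} \<in> E}"

definition deg :: "'a set \<Rightarrow> 'a set set \<Rightarrow> 'a \<Rightarrow> int" where
  "deg V E x = int (card (neighbours V E x))"

definition xi :: "'a set \<Rightarrow> 'a set set \<Rightarrow> 'a \<Rightarrow> int" where
  "xi V E s = (\<Sum>t\<in>neighbours V E s. deg V E t)"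

definition Qpairs :: "'a set set \<Rightarrow> 'a set set set" where
  "Qpairs E = {{{s, t}, {u, v}} | s t u v. {s, t} \<in> E \<and> {u, v} \<in> E \<and> distinct [s, t, u, v]}"

text \<open>Lambda_1: for each element of Q a labelling s,t,u,v is chosen; the summand
does not depend on the choice.\<close>

definition Lambda1 :: "'a set \<Rightarrow> 'a set set \<Rightarrow> int" where
  "Lambda1 V E = (\<Sum>p\<in>Qpairs E.
     (\<lambda>(s, t, u, v).
        adj E s u * (deg V E t + deg V E v) + adj E s v * (deg V E t + deg V E u)
      + adj E t u * (deg V E s + deg V E v) + adj E t v * (deg V E s + deg V E u))
     (SOME (s, t, u, v). p = {{s, t}, {u, v}} \<and> distinct [s, t, u, v]))"

end

theory Submission
  imports Defs
begin

text \<open>Every element {st, uv} of Q has exactly eight labellings (s, t, u, v), and the summand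
of Lambda_1 at {st, uv} is the sum of a_su k_t over them. Hence Lambda_1 is the sum of a_su k_t
over all labellings, i.e. over the paths t-s-u-v; here t \<noteq> v holds automatically because a
tree has no triangle. Grouping the paths by their middle dart (s, u), there are k_u - 1 choices
of v, and the degrees of the choices of t add up to xi(s) - k_u. Summing over both orientations
of each edge gives the right-hand side.\<close>

definition darts :: "'a set set \<Rightarrow> ('a \<times> 'a) set" where
  "darts E = {(s, t). {s, t} \<in> E}"

definition Q_tuples :: "'a set set \<Rightarrow> ('a \<times> 'a \<times> 'a \<times> 'a) set" where
  "Q_tuples E = {(s, t, u, v). {s, t} \<in> E \<and> {u, v} \<in> E \<and> distinct [s, t, u, v]}"

definition edge_pair :: "'a \<times> 'a \<times> 'a \<times> 'a \<Rightarrow> 'a set set" where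
  "edge_pair = (\<lambda>(s, t, u, v). {{s, t}, {u, v}})"

definition relabellings :: "'a \<times> 'a \<times> 'a \<times> 'a \<Rightarrow> ('a \<times> 'a \<times> 'a \<times> 'a) set" where
  "relabellings = (\<lambda>(s, t, u, v).
     {(s, t, u, v), (t, s, u, v), (s, t, v, u), (t, s, v, u),
      (u, v, s, t), (v, u, s, t), (u, v, t, s), (v, u, t, s)})"

definition Lambda1_term :: "'a set \<Rightarrow> 'a set set \<Rightarrow> 'a \<times> 'a \<times> 'a \<times> 'a \<Rightarrow> int" where
  "Lambda1_term V E = (\<lambda>(s, t, u, v).
        adj E s u * (deg V E t + deg V E v) + adj E s v * (deg V E t + deg V E u)
      + adj E t u * (deg V E s + deg V E v) + adj E t v * (deg V E s + deg V E u))"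

lemma adj_commute: "adj E x y = adj E y x"
  by (simp add: adj_def insert_commute)

lemma Lambda1_term_eq_sum_relabellings:
  assumes "distinct [s, t, u, v]"
  shows "Lambda1_term V E (s, t, u, v) =
    (\<Sum>(s', t', u', v')\<in>relabellings (s, t, u, v). adj E s' u' * deg V E t')"
  using assms by (simp add: relabellings_def Lambda1_term_def adj_commute algebra_simps)

lemma Qpairs_eq_image: "Qpairs E = edge_pair ` Q_tuples E"
  by (auto simp: Qpairs_def Q_tuples_def edge_pair_def image_def)

lemma doubleton_pair_eq_iff_relabelling:
  "{{s, t}, {u, v}} = {{a, b}, {c, d}} \<longleftrightarrow> (s, t, u, v) \<in> relabellings (a, b, c, d)"
  by (auto simp: relabellings_def doubleton_eq_iff)

lemma Q_tuples_fibre: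
  assumes "(s, t, u, v) \<in> Q_tuples E"
  shows "{y \<in> Q_tuples E. edge_pair y = edge_pair (s, t, u, v)} = relabellings (s, t, u, v)"
proof (intro set_eqI iffI)
  fix y assume y: "y \<in> {y \<in> Q_tuples E. edge_pair y = edge_pair (s, t, u, v)}"
  obtain a b c d where "y = (a, b, c, d)"
    by (rule prod_cases4)
  with y show "y \<in> relabellings (s, t, u, v)"
    by (simp add: edge_pair_def doubleton_pair_eq_iff_relabelling)
next
  fix y assume y: "y \<in> relabellings (s, t, u, v)"
  then have "y \<in> Q_tuples E"
    using assms by (auto simp: relabellings_def Q_tuples_def insert_commute)
  moreover obtain a b c d where "y = (a, b, c, d)"
    by (rule prod_cases4)
  ultimately show "y \<in> {y \<in> Q_tuples E. edge_pair y = edge_pair (s, t, u, v)}"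
    using y by (simp add: edge_pair_def doubleton_pair_eq_iff_relabelling)
qed

lemma Qpairs_representative:
  assumes "p \<in> Qpairs E"
  defines "x \<equiv> SOME (s, t, u, v). p = {{s, t}, {u, v}} \<and> distinct [s, t, u, v]"
  shows "x \<in> Q_tuples E" and "edge_pair x = p"
proof -
  obtain a b c d where abcd: "p = {{a, b}, {c, d}}" "distinct [a, b, c, d]"
      and "{a, b} \<in> E" "{c, d} \<in> E"
    using assms(1) unfolding Qpairs_def by blast
  then have "p \<subseteq> E"
    by simp
  have "(\<lambda>(s, t, u, v). p = {{s, t}, {u, v}} \<and> distinct [s, t, u, v]) x"
    unfolding x_def by (rule someI[of _ "(a, b, c, d)"]) (use abcd in simp)
  moreover obtain s t u v where x: "x = (s, t, u, v)"
    by (rule prod_cases4)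
  ultimately have "p = {{s, t}, {u, v}}" "distinct [s, t, u, v]"
    by simp_all
  with \<open>p \<subseteq> E\<close> show "x \<in> Q_tuples E" "edge_pair x = p"
    by (simp_all add: x Q_tuples_def edge_pair_def)
qed

locale finite_simple_graph =
  fixes V :: "'a set" and E :: "'a set set"
  assumes simple: "simple_graph V E"
begin

lemma edge_vertices: "{x, y} \<in> E \<Longrightarrow> x \<in> V \<and> y \<in> V \<and> x \<noteq> y"
  using simple unfolding simple_graph_def by (metis doubleton_eq_iff)

lemma finite_vertices: "finite V"
  using simple unfolding simple_graph_def by blast

lemma finite_edges: "finite E"
proof -
  have "E \<subseteq> Pow V"
    using simple unfolding simple_graph_def by auto
  then show ?thesis
    using finite_vertices by (simp add: finite_subset)
qed

lemma finite_darts: "finite (darts E)"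
proof -
  have "darts E \<subseteq> V \<times> V"
    by (auto simp: darts_def dest: edge_vertices)
  then show ?thesis
    using finite_vertices by (simp add: finite_subset)
qed

lemma finite_Q_tuples: "finite (Q_tuples E)"
proof -
  have "Q_tuples E \<subseteq> V \<times> V \<times> V \<times> V"
    by (auto simp: Q_tuples_def dest: edge_vertices)
  then show ?thesis
    using finite_vertices by (simp add: finite_subset)
qed

lemma finite_neighbours: "finite (neighbours V E s)"
  using finite_vertices by (simp add: neighbours_def)

lemma mem_neighbours_iff: "t \<in> neighbours V E s \<longleftrightarrow> {s, t} \<in> E"
  by (auto simp: neighbours_def dest: edge_vertices)

lemma Lambda1_eq_sum_Q_tuples:
  "Lambda1 V E = (\<Sum>(s, t, u, v)\<in>Q_tuples E. adj E s u * deg V E t)"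
proof -
  let ?H = "\<lambda>(s, t, u, v). adj E s u * deg V E t"
  let ?rep = "\<lambda>p. SOME (s, t, u, v). p = {{s, t}, {u, v}} \<and> distinct [s, t, u, v]"
  have fibre_sum: "Lambda1_term V E (?rep p) = (\<Sum>x\<in>{x \<in> Q_tuples E. edge_pair x = p}. ?H x)"
    if "p \<in> Qpairs E" for p
  proof -
    obtain s t u v where rep: "?rep p = (s, t, u, v)"
      by (rule prod_cases4)
    have stuv: "(s, t, u, v) \<in> Q_tuples E" "edge_pair (s, t, u, v) = p"
      using Qpairs_representative[OF that] unfolding rep by simp_all
    then have "distinct [s, t, u, v]"
      by (simp add: Q_tuples_def)
    then have "Lambda1_term V E (s, t, u, v) = (\<Sum>x\<in>relabellings (s, t, u, v). ?H x)"
      by (rule Lambda1_term_eq_sum_relabellings)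
    also have "relabellings (s, t, u, v) = {x \<in> Q_tuples E. edge_pair x = p}"
      using Q_tuples_fibre[OF stuv(1)] stuv(2) by simp
    finally show ?thesis
      unfolding rep .
  qed
  have "Lambda1 V E = (\<Sum>p\<in>Qpairs E. Lambda1_term V E (?rep p))"
    by (simp add: Lambda1_def Lambda1_term_def)
  also have "\<dots> = (\<Sum>p\<in>Qpairs E. \<Sum>x\<in>{x \<in> Q_tuples E. edge_pair x = p}. ?H x)"
    by (rule sum.cong[OF refl fibre_sum])
  also have "\<dots> = (\<Sum>x\<in>Q_tuples E. ?H x)"
    by (rule sum.group) (simp_all add: finite_Q_tuples Qpairs_eq_image)
  finally show ?thesis .
qed

lemma sum_edges_eq_sum_darts:
  fixes g :: "'a \<Rightarrow> 'a \<Rightarrow> 'b::comm_monoid_add"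
  shows "(\<Sum>e\<in>E. (\<lambda>(s, t). g s t + g t s) (SOME (s, t). e = {s, t})) = (\<Sum>(s, t)\<in>darts E. g s t)"
proof -
  let ?rep = "\<lambda>e. SOME (s, t). e = {s, t}"
  let ?edge = "\<lambda>(s, t). {s, t}"
  have fibre_sum: "(\<lambda>(s, t). g s t + g t s) (?rep e) = (\<Sum>d\<in>{d \<in> darts E. ?edge d = e}. case_prod g d)"
    if "e \<in> E" for e
  proof -
    obtain s t where rep: "?rep e = (s, t)"
      by (rule prod.exhaust)
    obtain a b where "e = {a, b}"
      using simple \<open>e \<in> E\<close> unfolding simple_graph_def by auto
    then have "(\<lambda>(s, t). e = {s, t}) (a, b)"
      by simp
    then have "(\<lambda>(s, t). e = {s, t}) (?rep e)"
      by (rule someI)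
    then have "e = {s, t}"
      by (simp add: rep)
    with \<open>e \<in> E\<close> have "s \<noteq> t"
      using edge_vertices by blast
    have "{d \<in> darts E. ?edge d = e} = {(s, t), (t, s)}"
    proof (intro set_eqI iffI)
      fix d assume "d \<in> {d \<in> darts E. ?edge d = e}"
      with \<open>e = {s, t}\<close> show "d \<in> {(s, t), (t, s)}"
        by (cases d) (simp add: doubleton_eq_iff)
    next
      fix d assume "d \<in> {(s, t), (t, s)}"
      with \<open>e = {s, t}\<close> \<open>e \<in> E\<close> show "d \<in> {d \<in> darts E. ?edge d = e}"
        by (auto simp: darts_def insert_commute)
    qed
    with \<open>s \<noteq> t\<close> show ?thesis
      by (simp add: rep)
  qed
  have "(\<Sum>e\<in>E. (\<lambda>(s, t). g s t + g t s) (?rep e))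
      = (\<Sum>e\<in>E. \<Sum>d\<in>{d \<in> darts E. ?edge d = e}. case_prod g d)"
    by (rule sum.cong[OF refl fibre_sum])
  also have "\<dots> = (\<Sum>d\<in>darts E. case_prod g d)"
    by (rule sum.group) (auto simp: finite_darts finite_edges, auto simp: darts_def)
  finally show ?thesis .
qed

lemma sum_over_dart_neighbourhoods:
  assumes "{s, u} \<in> E"
  shows "(\<Sum>(t, v)\<in>(neighbours V E s - {u}) \<times> (neighbours V E u - {s}). deg V E t)
    = (deg V E u - 1) * (xi V E s - deg V E u)"
proof -
  let ?N = "neighbours V E"
  have nbrs: "u \<in> ?N s" "s \<in> ?N u"
    using assms by (auto simp: mem_neighbours_iff insert_commute)
  then have "card (?N u) > 0"
    using finite_neighbours card_gt_0_iff by blast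
  have "(\<Sum>(t, v)\<in>(?N s - {u}) \<times> (?N u - {s}). deg V E t)
      = (\<Sum>t\<in>?N s - {u}. \<Sum>v\<in>?N u - {s}. deg V E t)"
    by (rule sum.cartesian_product[symmetric])
  also have "\<dots> = int (card (?N u - {s})) * (\<Sum>t\<in>?N s - {u}. deg V E t)"
    by (simp add: sum_distrib_left)
  also have "int (card (?N u - {s})) = deg V E u - 1"
    using nbrs finite_neighbours \<open>card (?N u) > 0\<close> by (simp add: deg_def of_nat_diff)
  also have "(\<Sum>t\<in>?N s - {u}. deg V E t) = xi V E s - deg V E u"
    using nbrs finite_neighbours by (simp add: xi_def sum_diff1)
  finally show ?thesis .
qed

lemma triangle_imp_has_cycle:
  assumes "{a, b} \<in> E" "{b, c} \<in> E" "{c, a} \<in> E"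
  shows "has_cycle E"
proof -
  have "is_walk E [a, b, c]"
    using assms by (auto simp: is_walk_def less_Suc_eq nth_Cons')
  moreover have "distinct [a, b, c]"
    using assms by (auto dest: edge_vertices)
  ultimately show ?thesis
    using assms(3) unfolding has_cycle_def by (intro exI[of _ "[a, b, c]"]) simp
qed

end

locale triangle_free_graph = finite_simple_graph +
  assumes no_triangle: "{a, b} \<in> E \<Longrightarrow> {b, c} \<in> E \<Longrightarrow> {c, a} \<in> E \<Longrightarrow> False"
begin

lemma sum_Q_tuples_eq_sum_darts:
  "(\<Sum>(s, t, u, v)\<in>Q_tuples E. adj E s u * deg V E t)
    = (\<Sum>(s, u)\<in>darts E. (deg V E u - 1) * (xi V E s - deg V E u))"
proof -
  let ?N = "neighbours V E"
  let ?B = "\<lambda>(s, u). (?N s - {u}) \<times> (?N u - {s})"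
  let ?path = "\<lambda>((s, u), (t, v)). (s, t, u, v)"
  have paths: "Q_tuples E \<inter> {(s, t, u, v). {s, u} \<in> E} = ?path ` Sigma (darts E) ?B"
  proof (intro set_eqI iffI)
    fix x assume "x \<in> Q_tuples E \<inter> {(s, t, u, v). {s, u} \<in> E}"
    then obtain s t u v where "x = (s, t, u, v)" "{s, t} \<in> E" "{u, v} \<in> E" "{s, u} \<in> E"
        "distinct [s, t, u, v]"
      by (auto simp: Q_tuples_def)
    then show "x \<in> ?path ` Sigma (darts E) ?B"
      by (force simp: darts_def mem_neighbours_iff insert_commute)
  next
    fix x assume "x \<in> ?path ` Sigma (darts E) ?B"
    then obtain s t u v where x: "x = (s, t, u, v)" "{s, u} \<in> E"
        "t \<in> ?N s - {u}" "v \<in> ?N u - {s}"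
      by (auto simp: darts_def)
    then have "{s, t} \<in> E" "{u, v} \<in> E" "t \<noteq> u" "v \<noteq> s"
      by (simp_all add: mem_neighbours_iff)
    moreover have "t \<noteq> v"
      using no_triangle[of s t u] x calculation by (auto simp: insert_commute)
    ultimately show "x \<in> Q_tuples E \<inter> {(s, t, u, v). {s, u} \<in> E}"
      using x by (auto simp: Q_tuples_def dest: edge_vertices)
  qed
  have "(\<Sum>(s, t, u, v)\<in>Q_tuples E. adj E s u * deg V E t)
      = (\<Sum>(s, t, u, v)\<in>Q_tuples E \<inter> {(s, t, u, v). {s, u} \<in> E}. deg V E t)"
    unfolding sum.inter_restrict[OF finite_Q_tuples] by (rule sum.cong) (auto simp: adj_def)
  also have "\<dots> = (\<Sum>((s, u), (t, v))\<in>Sigma (darts E) ?B. deg V E t)"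
    unfolding paths by (subst sum.reindex) (auto simp: inj_on_def intro!: sum.cong)
  also have "\<dots> = (\<Sum>(s, u)\<in>darts E. \<Sum>(t, v)\<in>?B (s, u). deg V E t)"
    by (simp add: sum.Sigma finite_darts finite_neighbours split_def)
  also have "\<dots> = (\<Sum>(s, u)\<in>darts E. (deg V E u - 1) * (xi V E s - deg V E u))"
    by (rule sum.cong) (auto simp: darts_def sum_over_dart_neighbourhoods)
  finally show ?thesis .
qed

end

lemma tree_is_triangle_free:
  assumes "is_tree V E"
  shows "triangle_free_graph V E"
proof -
  interpret finite_simple_graph V E
    using assms by (simp add: finite_simple_graph_def is_tree_def)
  show ?thesis
    using assms triangle_imp_has_cycle
    by unfold_locales (auto simp: is_tree_def)
qed

theorem corollary1:
  assumes "is_tree V E"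
  shows "Lambda1 V E =
    (\<Sum>e\<in>E. (\<lambda>(s, t). (deg V E t - 1) * (xi V E s - deg V E t)
                          + (deg V E s - 1) * (xi V E t - deg V E s))
             (SOME (s, t). e = {s, t}))"
proof -
  interpret triangle_free_graph V E
    using assms by (rule tree_is_triangle_free)
  have "Lambda1 V E = (\<Sum>(s, u)\<in>darts E. (deg V E u - 1) * (xi V E s - deg V E u))"
    unfolding Lambda1_eq_sum_Q_tuples by (rule sum_Q_tuples_eq_sum_darts)
  also have "\<dots> = (\<Sum>e\<in>E. (\<lambda>(s, t). (deg V E t - 1) * (xi V E s - deg V E t)
                          + (deg V E s - 1) * (xi V E t - deg V E s))
             (SOME (s, t). e = {s, t}))"
    by (rule sum_edges_eq_sum_darts[where g = "\<lambda>s t. (deg V E t - 1) * (xi V E s - deg V E t)",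
          symmetric])
  finally show ?thesis .
qed

end
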